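(* Let $X$ and $Y$ be sets and let $A=(a_{y,x})_{(y,x)\in Y\times X}$ be a sparse-sparse operator. The following are equivalent: (i) $A$ is absolutely uniformly bounded; (ii) $A$ is bounded in $\ell^p$ for some $1\leq p\leq\infty$; (iii) $A$ has bounded coefficients, i.e. $\sup_{y,x}|a_{y,x}|<\infty$.
   Context: $A$ is sparse-sparse if there is $v<\infty$ such that the support of every row $(a_{y,x})_{x\in X}$ and of every column $(a_{y,x})_{y\in Y}$ has cardinality at most $v$. Writing $|A|=(|a_{y,x}|)$, $A$ is absolutely uniformly bounded if $\sup_{1\leq p\leq\infty}\||A|\|_{p\to p}<\infty$. *)

theory Defs
  imports "HOL-Analysis.Analysis"
begin

definition sparse_sparse :: "('y \<Rightarrow> 'x \<Rightarrow> 'k::zero) \<Rightarrow> bool" where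
  "sparse_sparse A \<longleftrightarrow> (\<exists>v::nat.
      (\<forall>y. finite {x. A y x \<noteq> 0} \<and> card {x. A y x \<noteq> 0} \<le> v) \<and>
      (\<forall>x. finite {y. A y x \<noteq> 0} \<and> card {y. A y x \<noteq> 0} \<le> v))"

text \<open>Action of the matrix on a function on X (finite row sums for sparse-sparse matrices).\<close>
definition mat_apply :: "('y \<Rightarrow> 'x \<Rightarrow> 'k::real_normed_field) \<Rightarrow> ('x \<Rightarrow> 'k) \<Rightarrow> 'y \<Rightarrow> 'k" where
  "mat_apply A f y = (\<Sum>x\<in>{x. A y x \<noteq> 0}. A y x * f x)"

definition in_lp :: "ereal \<Rightarrow> ('x \<Rightarrow> 'k::real_normed_vector) \<Rightarrow> bool" where
  "in_lp p f \<longleftrightarrow> (if p = \<infinity> then bdd_above (range (\<lambda>x. norm (f x)))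
     else (\<lambda>x. norm (f x) powr real_of_ereal p) summable_on UNIV)"

definition lp_norm :: "ereal \<Rightarrow> ('x \<Rightarrow> 'k::real_normed_vector) \<Rightarrow> real" where
  "lp_norm p f = (if p = \<infinity> then (SUP x. norm (f x))
     else (infsum (\<lambda>x. norm (f x) powr real_of_ereal p) UNIV) powr (1 / real_of_ereal p))"

definition lp_bound :: "ereal \<Rightarrow> ('y \<Rightarrow> 'x \<Rightarrow> 'k::real_normed_field) \<Rightarrow> real \<Rightarrow> bool" where
  "lp_bound p A C \<longleftrightarrow> (\<forall>f. in_lp p f \<longrightarrow>
      in_lp p (mat_apply A f) \<and> lp_norm p (mat_apply A f) \<le> C * lp_norm p f)"

text \<open>Operator norm on \<ell>^p (value \<infinity> if unbounded).\<close>
definition lp_opnorm :: "ereal \<Rightarrow> ('y \<Rightarrow> 'x \<Rightarrow> 'k::real_normed_field) \<Rightarrow> ereal" where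
  "lp_opnorm p A = Inf {ereal C | C. 0 \<le> C \<and> lp_bound p A C}"

definition abs_mat :: "('y \<Rightarrow> 'x \<Rightarrow> 'k::real_normed_field) \<Rightarrow> 'y \<Rightarrow> 'x \<Rightarrow> real" where
  "abs_mat A = (\<lambda>y x. norm (A y x))"

definition abs_unif_bounded :: "('y \<Rightarrow> 'x \<Rightarrow> 'k::real_normed_field) \<Rightarrow> bool" where
  "abs_unif_bounded A \<longleftrightarrow> (SUP p\<in>{1..\<infinity>}. lp_opnorm p (abs_mat A)) < \<infinity>"

definition bounded_coeffs :: "('y \<Rightarrow> 'x \<Rightarrow> 'k::real_normed_field) \<Rightarrow> bool" where
  "bounded_coeffs A \<longleftrightarrow> (SUP yx. ereal (norm (A (fst yx) (snd yx)))) < \<infinity>"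

end

theory Submission
  imports Defs
begin

text \<open>Applying A to the unit vector at x produces the column (a_{y,x})_y, so an \<ell>^p bound C
  on A bounds every coefficient by C. Conversely, let |a_{y,x}| \<le> M and let rows and columns
  have at most v nonzero entries. Then |(Af)(y)|^p \<le> (Mv)^p \<Sum>_{a_{y,x} \<noteq> 0} |f(x)|^p, and
  summing over y counts each |f(x)|^p at most v times, so \<parallel>A\<parallel>_{p\<rightarrow>p} \<le> M v^2 for all
  p \<ge> 1 simultaneously. Since |A| is sparse-sparse with the same coefficient sizes, the
  three conditions are equivalent.\<close>

lemma abs_mat_eq_0_iff [simp]: "abs_mat A y x = 0 \<longleftrightarrow> A y x = 0"
  by (simp add: abs_mat_def)

lemma abs_abs_mat [simp]: "\<bar>abs_mat A y x\<bar> = norm (A y x)"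
  by (simp add: abs_mat_def)

lemma mat_apply_unit_vector:
  assumes "finite {x. A y x \<noteq> 0}"
  shows "mat_apply A (\<lambda>x'. if x' = x then 1 else 0) y = A y x"
proof -
  have "mat_apply A (\<lambda>x'. if x' = x then 1 else 0) y
      = (\<Sum>x'\<in>{x. A y x \<noteq> 0}. if x' = x then A y x' else 0)"
    unfolding mat_apply_def by (intro sum.cong) auto
  also have "\<dots> = A y x"
    using assms by simp
  finally show ?thesis .
qed

lemma unit_vector_in_lp:
  assumes "1 \<le> p"
  shows "in_lp p (\<lambda>x'. if x' = x then (1::'k::real_normed_algebra_1) else 0)
    \<and> lp_norm p (\<lambda>x'. if x' = x then (1::'k) else 0) = 1"
proof (cases p)
  case PInf
  have "(SUP x'. norm (if x' = x then (1::'k) else 0)) = 1"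
    by (rule antisym, rule cSUP_least)
      (auto intro!: cSUP_upper2[of _ _ x] bdd_aboveI[of _ 1])
  then show ?thesis
    using PInf by (auto simp: in_lp_def lp_norm_def intro!: bdd_aboveI[of _ 1])
next
  case (real q)
  with assms have "q \<ge> 1" by simp
  then have "(\<lambda>x'. norm (if x' = x then (1::'k) else 0) powr q) = (\<lambda>x'. if x' = x then 1 else 0)"
    by auto
  moreover have "((\<lambda>x'. if x' = x then 1 else 0) has_sum (1::real)) UNIV"
  proof (rule has_sum_cong_neutral[THEN iffD2])
    show "((\<lambda>x'. if x' = x then 1 else 0) has_sum (1::real)) {x}"
      using has_sum_finite[of "{x}" "\<lambda>x'. if x' = x then (1::real) else 0"] by simp
  qed auto
  ultimately show ?thesis
    using real by (auto simp: in_lp_def lp_norm_def summable_on_def infsumI)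
next
  case MInf
  with assms show ?thesis by simp
qed

lemma norm_le_lp_norm:
  fixes f :: "'x \<Rightarrow> 'k::real_normed_vector"
  assumes "in_lp p f" "1 \<le> p"
  shows "norm (f x) \<le> lp_norm p f"
proof (cases p)
  case PInf
  with assms show ?thesis
    by (auto simp: in_lp_def lp_norm_def intro: cSUP_upper)
next
  case (real q)
  with assms have q: "q \<ge> 1" and sum: "(\<lambda>x. norm (f x) powr q) summable_on UNIV"
    by (auto simp: in_lp_def)
  have "norm (f x) powr q \<le> infsum (\<lambda>x. norm (f x) powr q) UNIV"
    using finite_sum_le_infsum[OF sum, of "{x}"] by simp
  then have "(norm (f x) powr q) powr (1/q) \<le> infsum (\<lambda>x. norm (f x) powr q) UNIV powr (1/q)"
    using q by (intro powr_mono2) auto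
  with q real show ?thesis
    by (simp add: lp_norm_def powr_powr)
next
  case MInf
  with assms show ?thesis by simp
qed

lemma lp_bound_imp_norm_le:
  fixes A :: "'y \<Rightarrow> 'x \<Rightarrow> 'k::real_normed_field"
  assumes "finite {x. A y x \<noteq> 0}" "lp_bound p A C" "1 \<le> p"
  shows "norm (A y x) \<le> C"
proof -
  define e :: "'x \<Rightarrow> 'k" where "e = (\<lambda>x'. if x' = x then 1 else 0)"
  have "in_lp p e" and norm_e: "lp_norm p e = 1"
    unfolding e_def using unit_vector_in_lp[OF \<open>1 \<le> p\<close>, where 'k='k, of x] by simp_all
  with assms(2) have "in_lp p (mat_apply A e)" "lp_norm p (mat_apply A e) \<le> C"
    unfolding lp_bound_def by auto
  then show ?thesis
    using norm_le_lp_norm[of p "mat_apply A e" y] assms(1,3)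
    by (simp add: e_def mat_apply_unit_vector)
qed

lemma norm_mat_apply_powr_le:
  fixes A :: "'y \<Rightarrow> 'x \<Rightarrow> 'k::real_normed_field"
  assumes row: "finite {x. A y x \<noteq> 0}" "card {x. A y x \<noteq> 0} \<le> v"
    and M: "\<And>x. norm (A y x) \<le> M" and "q > 0"
  shows "norm (mat_apply A f y) powr q
    \<le> (M * v) powr q * (\<Sum>x\<in>{x. A y x \<noteq> 0}. norm (f x) powr q)"
proof (cases "{x. A y x \<noteq> 0} = {}")
  case True
  then show ?thesis by (simp add: mat_apply_def)
next
  case False
  define S where "S = {x. A y x \<noteq> 0}"
  have "Max ((\<lambda>x. norm (f x)) ` S) \<in> (\<lambda>x. norm (f x)) ` S"
    using False row(1) unfolding S_def by (intro Max_in) auto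
  then obtain x0 where x0: "x0 \<in> S" "Max ((\<lambda>x. norm (f x)) ` S) = norm (f x0)"
    by auto
  have max: "norm (f x) \<le> norm (f x0)" if "x \<in> S" for x
    using x0(2) that row(1) unfolding S_def by (metis Max_ge finite_imageI imageI)
  have "M \<ge> 0" using M[of x0] norm_ge_zero order_trans by blast
  have "norm (mat_apply A f y) \<le> (\<Sum>x\<in>S. norm (A y x * f x))"
    unfolding mat_apply_def S_def by (rule norm_sum)
  also have "\<dots> \<le> (\<Sum>x\<in>S. M * norm (f x0))"
    using \<open>M \<ge> 0\<close> by (intro sum_mono) (auto simp: norm_mult intro!: mult_mono M max)
  also have "\<dots> = real (card S) * (M * norm (f x0))"
    by simp
  also have "\<dots> \<le> (M * v) * norm (f x0)"
    using row(2) \<open>M \<ge> 0\<close> unfolding S_def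
    by (metis mult.assoc mult.commute mult_right_mono norm_ge_zero of_nat_mono)
  finally have "norm (mat_apply A f y) powr q \<le> ((M * v) * norm (f x0)) powr q"
    using \<open>q > 0\<close> by (intro powr_mono2) auto
  also have "\<dots> = (M * v) powr q * norm (f x0) powr q"
    using \<open>M \<ge> 0\<close> by (simp add: powr_mult)
  also have "\<dots> \<le> (M * v) powr q * (\<Sum>x\<in>S. norm (f x) powr q)"
    using x0 row(1) by (intro mult_left_mono member_le_sum) (auto simp: S_def)
  finally show ?thesis by (simp add: S_def)
qed

text \<open>Double counting: each x lies in the support of at most v rows.\<close>

lemma sum_row_supports_le_infsum:
  fixes A :: "'y \<Rightarrow> 'x \<Rightarrow> 'k::zero" and a :: "'x \<Rightarrow> real"
  assumes rows: "\<And>y. finite {x. A y x \<noteq> 0}"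
    and cols: "\<And>x. finite {y. A y x \<noteq> 0} \<and> card {y. A y x \<noteq> 0} \<le> v"
    and a: "\<And>x. a x \<ge> 0" "a summable_on UNIV" and "finite F"
  shows "(\<Sum>y\<in>F. \<Sum>x\<in>{x. A y x \<noteq> 0}. a x) \<le> v * infsum a UNIV"
proof -
  define U where "U = (\<Union>y\<in>F. {x. A y x \<noteq> 0})"
  have "finite U"
    using \<open>finite F\<close> rows by (simp add: U_def)
  have "(\<Sum>y\<in>F. \<Sum>x\<in>{x. A y x \<noteq> 0}. a x) = (\<Sum>y\<in>F. \<Sum>x\<in>U. if A y x \<noteq> 0 then a x else 0)"
  proof (rule sum.cong[OF refl])
    fix y assume "y \<in> F"
    then have "{x. A y x \<noteq> 0} = {x\<in>U. A y x \<noteq> 0}"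
      by (auto simp: U_def)
    then show "(\<Sum>x\<in>{x. A y x \<noteq> 0}. a x) = (\<Sum>x\<in>U. if A y x \<noteq> 0 then a x else 0)"
      using \<open>finite U\<close> by (simp add: sum.inter_filter)
  qed
  also have "\<dots> = (\<Sum>x\<in>U. real (card {y\<in>F. A y x \<noteq> 0}) * a x)"
    using \<open>finite F\<close> by (subst sum.swap) (simp add: sum.If_cases Int_def conj_commute)
  also have "\<dots> \<le> (\<Sum>x\<in>U. v * a x)"
  proof (intro sum_mono mult_right_mono a)
    fix x
    have "card {y\<in>F. A y x \<noteq> 0} \<le> card {y. A y x \<noteq> 0}"
      using cols[of x] by (intro card_mono) auto
    with cols[of x] show "real (card {y\<in>F. A y x \<noteq> 0}) \<le> v"
      by linarith
  qed
  also have "\<dots> \<le> v * infsum a UNIV"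
    using \<open>finite U\<close> a by (simp add: sum_distrib_left[symmetric] mult_left_mono
        finite_sum_le_infsum)
  finally show ?thesis .
qed

lemma lp_bound_sparse_real:
  fixes A :: "'y \<Rightarrow> 'x \<Rightarrow> 'k::real_normed_field"
  assumes rows: "\<And>y. finite {x. A y x \<noteq> 0} \<and> card {x. A y x \<noteq> 0} \<le> v"
    and cols: "\<And>x. finite {y. A y x \<noteq> 0} \<and> card {y. A y x \<noteq> 0} \<le> v"
    and M: "\<And>y x. norm (A y x) \<le> M" and "q \<ge> 1"
  shows "lp_bound (ereal q) A (M * v * v)"
  unfolding lp_bound_def
proof (intro allI impI)
  fix f :: "'x \<Rightarrow> 'k"
  assume "in_lp (ereal q) f"
  define a where "a = (\<lambda>x. norm (f x) powr q)"
  define T where "T = infsum a UNIV"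
  define K where "K = (M * v) powr q * (v * T)"
  have "a summable_on UNIV"
    using \<open>in_lp (ereal q) f\<close> by (simp add: in_lp_def a_def)
  have "M \<ge> 0"
    using M norm_ge_zero order_trans by blast
  have "T \<ge> 0"
    unfolding T_def a_def by (rule infsum_nonneg) simp
  have partial_sums: "(\<Sum>y\<in>F. norm (mat_apply A f y) powr q) \<le> K" if "finite F" for F
  proof -
    have "(\<Sum>y\<in>F. norm (mat_apply A f y) powr q)
        \<le> (\<Sum>y\<in>F. (M * v) powr q * (\<Sum>x\<in>{x. A y x \<noteq> 0}. a x))"
      unfolding a_def using rows M \<open>q \<ge> 1\<close> by (intro sum_mono norm_mat_apply_powr_le) auto
    also have "\<dots> = (M * v) powr q * (\<Sum>y\<in>F. \<Sum>x\<in>{x. A y x \<noteq> 0}. a x)"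
      by (simp add: sum_distrib_left)
    also have "\<dots> \<le> K"
      unfolding K_def T_def using rows cols \<open>a summable_on UNIV\<close> \<open>finite F\<close>
      by (intro mult_left_mono sum_row_supports_le_infsum) (auto simp: a_def)
    finally show ?thesis .
  qed
  have summable: "(\<lambda>y. norm (mat_apply A f y) powr q) summable_on UNIV"
    by (rule nonneg_bdd_above_summable_on) (auto intro!: bdd_aboveI[of _ K] partial_sums)
  have "lp_norm (ereal q) (mat_apply A f) \<le> K powr (1/q)"
    unfolding lp_norm_def using \<open>q \<ge> 1\<close>
    by (auto intro!: powr_mono2 infsum_nonneg infsum_le_finite_sums[OF summable] partial_sums)
  also have "K powr (1/q) = M * v * v powr (1/q) * T powr (1/q)"
    unfolding K_def using \<open>M \<ge> 0\<close> \<open>T \<ge> 0\<close> \<open>q \<ge> 1\<close> by (simp add: powr_mult powr_powr)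
  also have "\<dots> \<le> M * v * v * T powr (1/q)"
  proof -
    have "real v powr (1/q) \<le> v"
      using \<open>q \<ge> 1\<close> powr_mono[of "1/q" 1 "real v"] by (cases "v = 0") auto
    with \<open>M \<ge> 0\<close> show ?thesis
      by (intro mult_right_mono mult_left_mono) auto
  qed
  also have "T powr (1/q) = lp_norm (ereal q) f"
    by (simp add: lp_norm_def T_def a_def)
  finally show "in_lp (ereal q) (mat_apply A f)
      \<and> lp_norm (ereal q) (mat_apply A f) \<le> M * v * v * lp_norm (ereal q) f"
    using summable by (simp add: in_lp_def)
qed

lemma lp_bound_sparse_infinity:
  fixes A :: "'y \<Rightarrow> 'x \<Rightarrow> 'k::real_normed_field"
  assumes rows: "\<And>y. finite {x. A y x \<noteq> 0} \<and> card {x. A y x \<noteq> 0} \<le> v"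
    and M: "\<And>y x. norm (A y x) \<le> M"
  shows "lp_bound \<infinity> A (M * v * v)"
  unfolding lp_bound_def
proof (intro allI impI)
  fix f :: "'x \<Rightarrow> 'k"
  assume "in_lp \<infinity> f"
  then have f_le: "norm (f x) \<le> lp_norm \<infinity> f" for x
    by (simp add: norm_le_lp_norm)
  have "M \<ge> 0" "lp_norm \<infinity> f \<ge> 0"
    using M f_le norm_ge_zero order_trans by blast+
  have Af_le: "norm (mat_apply A f y) \<le> M * v * v * lp_norm \<infinity> f" for y
  proof -
    have "norm (mat_apply A f y) \<le> (\<Sum>x\<in>{x. A y x \<noteq> 0}. norm (A y x * f x))"
      unfolding mat_apply_def by (rule norm_sum)
    also have "\<dots> \<le> (\<Sum>x\<in>{x. A y x \<noteq> 0}. M * lp_norm \<infinity> f)"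
      using \<open>M \<ge> 0\<close> by (intro sum_mono) (auto simp: norm_mult intro!: mult_mono M f_le)
    also have "\<dots> \<le> v * (M * lp_norm \<infinity> f)"
      using rows[of y] \<open>M \<ge> 0\<close> \<open>lp_norm \<infinity> f \<ge> 0\<close> by (simp add: mult_right_mono)
    also have "\<dots> \<le> v * v * (M * lp_norm \<infinity> f)"
      using \<open>M \<ge> 0\<close> \<open>lp_norm \<infinity> f \<ge> 0\<close> by (intro mult_right_mono) (auto simp flip: of_nat_mult)
    finally show ?thesis
      by (simp add: algebra_simps)
  qed
  then have "bdd_above (range (\<lambda>y. norm (mat_apply A f y)))"
    by (intro bdd_aboveI) auto
  with Af_le show "in_lp \<infinity> (mat_apply A f)
      \<and> lp_norm \<infinity> (mat_apply A f) \<le> M * v * v * lp_norm \<infinity> f"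
    by (simp add: in_lp_def lp_norm_def cSUP_least)
qed

lemma lp_bound_sparse:
  fixes A :: "'y \<Rightarrow> 'x \<Rightarrow> 'k::real_normed_field"
  assumes "\<And>y. finite {x. A y x \<noteq> 0} \<and> card {x. A y x \<noteq> 0} \<le> v"
    and "\<And>x. finite {y. A y x \<noteq> 0} \<and> card {y. A y x \<noteq> 0} \<le> v"
    and "\<And>y x. norm (A y x) \<le> M" and "1 \<le> p"
  shows "lp_bound p A (M * v * v)"
  using assms lp_bound_sparse_real[OF assms(1-3)] lp_bound_sparse_infinity[OF assms(1,3)]
  by (cases p) auto

lemma bounded_coeffs_iff: "bounded_coeffs A \<longleftrightarrow> (\<exists>M. \<forall>y x. norm (A y x) \<le> M)"
proof
  define S where "S = (SUP yx. ereal (norm (A (fst yx) (snd yx))))"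
  have upper: "ereal (norm (A y x)) \<le> S" for y x
    unfolding S_def by (rule SUP_upper2[of "(y, x)"]) auto
  assume "bounded_coeffs A"
  then have "S \<noteq> \<infinity>" "S \<noteq> -\<infinity>"
    using upper[of undefined undefined] by (auto simp: bounded_coeffs_def S_def)
  then have "norm (A y x) \<le> real_of_ereal S" for y x
    using upper[of y x] by (cases S) auto
  then show "\<exists>M. \<forall>y x. norm (A y x) \<le> M" by blast
next
  assume "\<exists>M. \<forall>y x. norm (A y x) \<le> M"
  then obtain M where "\<And>y x. norm (A y x) \<le> M" by blast
  then have "(SUP yx. ereal (norm (A (fst yx) (snd yx)))) \<le> ereal M"
    by (intro SUP_least) simp
  then show "bounded_coeffs A"
    unfolding bounded_coeffs_def using le_less_trans by fastforce
qed

lemma bounded_coeffs_abs_mat [simp]: "bounded_coeffs (abs_mat A) \<longleftrightarrow> bounded_coeffs A"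
  by (simp add: bounded_coeffs_iff)

lemma lp_opnorm_le:
  assumes "lp_bound p A C" "0 \<le> C"
  shows "lp_opnorm p A \<le> ereal C"
  unfolding lp_opnorm_def using assms by (blast intro: Inf_lower)

lemma lp_opnorm_finite_imp_bounded_coeffs:
  fixes A :: "'y \<Rightarrow> 'x \<Rightarrow> 'k::real_normed_field"
  assumes "\<And>y. finite {x. A y x \<noteq> 0}" "1 \<le> p" "lp_opnorm p A < \<infinity>"
  shows "bounded_coeffs A"
proof -
  obtain C where "lp_bound p A C"
    using \<open>lp_opnorm p A < \<infinity>\<close> unfolding lp_opnorm_def Inf_less_iff by blast
  with assms show ?thesis
    unfolding bounded_coeffs_iff by (metis lp_bound_imp_norm_le)
qed

lemma sparse_sparse_abs_mat [simp]: "sparse_sparse (abs_mat A) \<longleftrightarrow> sparse_sparse A"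
  by (simp add: sparse_sparse_def)

lemma sparse_sparse_lp_opnorm_uniform_bound:
  fixes A :: "'y \<Rightarrow> 'x \<Rightarrow> 'k::real_normed_field"
  assumes "sparse_sparse A" "bounded_coeffs A"
  obtains C where "\<And>p. 1 \<le> p \<Longrightarrow> lp_opnorm p A \<le> ereal C"
proof -
  obtain v where "\<And>y. finite {x. A y x \<noteq> 0} \<and> card {x. A y x \<noteq> 0} \<le> v"
    and "\<And>x. finite {y. A y x \<noteq> 0} \<and> card {y. A y x \<noteq> 0} \<le> v"
    using \<open>sparse_sparse A\<close> unfolding sparse_sparse_def by blast
  moreover obtain M where M: "\<And>y x. norm (A y x) \<le> M"
    using \<open>bounded_coeffs A\<close> unfolding bounded_coeffs_iff by blast
  moreover have "0 \<le> M * v * v"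
    using norm_ge_zero[of "A undefined undefined"] M
    by (metis mult_nonneg_nonneg of_nat_0_le_iff order_trans)
  ultimately show ?thesis
    using that lp_bound_sparse lp_opnorm_le by metis
qed

lemma sparse_sparse_lp_opnorm_finite_iff:
  fixes A :: "'y \<Rightarrow> 'x \<Rightarrow> 'k::real_normed_field"
  assumes "sparse_sparse A" "1 \<le> p"
  shows "lp_opnorm p A < \<infinity> \<longleftrightarrow> bounded_coeffs A"
proof
  assume "lp_opnorm p A < \<infinity>"
  moreover have "\<And>y. finite {x. A y x \<noteq> 0}"
    using \<open>sparse_sparse A\<close> unfolding sparse_sparse_def by blast
  ultimately show "bounded_coeffs A"
    using \<open>1 \<le> p\<close> by (intro lp_opnorm_finite_imp_bounded_coeffs[of _ p])
next
  assume "bounded_coeffs A"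
  with assms obtain C where "lp_opnorm p A \<le> ereal C"
    by (metis sparse_sparse_lp_opnorm_uniform_bound)
  then show "lp_opnorm p A < \<infinity>"
    by (rule le_less_trans) simp
qed

lemma sparse_sparse_abs_unif_bounded_iff:
  fixes A :: "'y \<Rightarrow> 'x \<Rightarrow> 'k::real_normed_field"
  assumes "sparse_sparse A"
  shows "abs_unif_bounded A \<longleftrightarrow> bounded_coeffs A"
proof
  assume "abs_unif_bounded A"
  then have "lp_opnorm 1 (abs_mat A) < \<infinity>"
    unfolding abs_unif_bounded_def by (rule le_less_trans[rotated]) (rule SUP_upper, simp)
  with assms show "bounded_coeffs A"
    using sparse_sparse_lp_opnorm_finite_iff[of "abs_mat A" 1] by simp
next
  assume "bounded_coeffs A"
  with assms obtain C where "\<And>p. 1 \<le> p \<Longrightarrow> lp_opnorm p (abs_mat A) \<le> ereal C"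
    by (metis bounded_coeffs_abs_mat sparse_sparse_abs_mat sparse_sparse_lp_opnorm_uniform_bound)
  then have "(SUP p\<in>{1..\<infinity>}. lp_opnorm p (abs_mat A)) \<le> ereal C"
    by (intro SUP_least) simp
  then show "abs_unif_bounded A"
    unfolding abs_unif_bounded_def by (rule le_less_trans) simp
qed

theorem proposition3p3:
  fixes A :: "'y \<Rightarrow> 'x \<Rightarrow> 'k::real_normed_field"
  assumes "sparse_sparse A"
  shows "(abs_unif_bounded A \<longleftrightarrow> (\<exists>p::ereal. 1 \<le> p \<and> lp_opnorm p A < \<infinity>))
       \<and> ((\<exists>p::ereal. 1 \<le> p \<and> lp_opnorm p A < \<infinity>) \<longleftrightarrow> bounded_coeffs A)"
proof -
  have "(\<exists>p::ereal. 1 \<le> p \<and> lp_opnorm p A < \<infinity>) \<longleftrightarrow> bounded_coeffs A"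
  proof
    show "bounded_coeffs A" if "\<exists>p::ereal. 1 \<le> p \<and> lp_opnorm p A < \<infinity>"
      using that sparse_sparse_lp_opnorm_finite_iff[OF assms] by (elim exE conjE) blast
    show "\<exists>p::ereal. 1 \<le> p \<and> lp_opnorm p A < \<infinity>" if "bounded_coeffs A"
      using that sparse_sparse_lp_opnorm_finite_iff[OF assms, of 1] by (intro exI[of _ 1]) simp
  qed
  with sparse_sparse_abs_unif_bounded_iff[OF assms] show ?thesis
    by blast
qed

end
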